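(* Consider binary node classification with classes $\{0,1\}$, and let $k\in\{0,1\}$. Let $c_0,c_1\in(0,1)$ be the class homophily parameters, and assume the classes are balanced, i.e. $P(\hat{Y}=0)=P(\hat{Y}=1)$, and the graph is heterophilic, i.e. $c_k < 1-c_{1-k}$. Then for any node $i$ with neighborhood $\mathcal{N}(i)$ and observed neighbor labels $\{Y_j=y_j\}_{j\in\mathcal{N}(i)}$, $$P\big(\hat{Y}_i = k \mid \{Y_j=y_j\}_{j\in\mathcal{N}(i)}\big) > 0.5$$ if and only if $$|\mathcal{N}_k(i)| < |\mathcal{N}_{1-k}(i)| \cdot \frac{\log c_{1-k} - \log (1 - c_k)}{\log c_k - \log (1 - c_{1-k})}.$$
   Context: Model: each node $i$ has a (latent/soft) class $\hat{Y}_i\in\{0,1\}$, and each neighbor $j\in\mathcal{N}(i)$ has an observed label $Y_j\in\{0,1\}$. Given $\hat{Y}_i$, the neighbor labels are conditionally independent with $P(Y_j=k\mid \hat{Y}_i=k)=c_k$ and $P(Y_j=1-k\mid\hat{Y}_i=k)=1-c_k$ for $k\in\{0,1\}$ ($c_k$ is called the class homophily of class $k$). The posterior is obtained by Bayes' rule: $P(\hat Y_i=k\mid\{Y_j=y_j\}_{j\in\mathcal N(i)})\propto P(\hat Y_i=k)\prod_{j\in\mathcal N(i)}P(Y_j=y_j\mid \hat Y_i=k)$. Notation: $\mathcal{N}_k(i)=\{j\in\mathcal{N}(i): y_j=k\}$ and $\mathcal{N}_{1-k}(i)=\{j\in\mathcal{N}(i): y_j=1-k\}$. *)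

theory Defs
  imports "HOL-Analysis.Analysis"
begin

text \<open>Classes are the naturals 0 and 1. c k is the class homophily of class k.
  Conditional likelihood of a single neighbour label yj given latent class k.\<close>
definition lik :: "(nat \<Rightarrow> real) \<Rightarrow> nat \<Rightarrow> nat \<Rightarrow> real" where
  "lik c k yj = (if yj = k then c k else 1 - c k)"

definition joint :: "(nat \<Rightarrow> real) \<Rightarrow> (nat \<Rightarrow> real) \<Rightarrow> 'a set \<Rightarrow> ('a \<Rightarrow> nat) \<Rightarrow> nat \<Rightarrow> real" where
  "joint prior c N y k = prior k * (\<Prod>j\<in>N. lik c k (y j))"

definition posterior :: "(nat \<Rightarrow> real) \<Rightarrow> (nat \<Rightarrow> real) \<Rightarrow> 'a set \<Rightarrow> ('a \<Rightarrow> nat) \<Rightarrow> nat \<Rightarrow> real" where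
  "posterior prior c N y k = joint prior c N y k / (\<Sum>k'\<in>{0,1}. joint prior c N y k')"

definition nbrs_with :: "'a set \<Rightarrow> ('a \<Rightarrow> nat) \<Rightarrow> nat \<Rightarrow> 'a set" where
  "nbrs_with N y k = {j \<in> N. y j = k}"

end

theory Submission
  imports Defs
begin

text \<open>With \<open>a = c k\<close>, \<open>b = c (1 - k)\<close> and \<open>n\<close>, \<open>m\<close> the numbers of neighbours labelled
  \<open>k\<close> and \<open>1 - k\<close>, the likelihood products of the two classes are \<open>a\<^sup>n (1 - a)\<^sup>m\<close> and
  \<open>(1 - b)\<^sup>n b\<^sup>m\<close>. With balanced priors the posterior of \<open>k\<close> exceeds one half iff the
  first product is the larger; taking logarithms gives a linear inequality in \<open>n\<close> and \<open>m\<close>,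
  and heterophily \<open>a < 1 - b\<close> makes the coefficient \<open>ln a - ln (1 - b)\<close> of \<open>n\<close> negative,
  which fixes the direction of the inequality after dividing by it.\<close>

lemma prod_lik_eq_power_card:
  fixes c :: "nat \<Rightarrow> real" and N :: "'a set" and y :: "'a \<Rightarrow> nat"
  assumes "finite N" and "\<forall>j\<in>N. y j \<in> {0, 1}" and "k \<in> {0, 1}"
  shows "(\<Prod>j\<in>N. lik c l (y j)) =
    lik c l k ^ card (nbrs_with N y k) * lik c l (1 - k) ^ card (nbrs_with N y (1 - k))"
proof -
  have partition: "N = nbrs_with N y k \<union> nbrs_with N y (1 - k)"
    using assms(2,3) by (auto simp: nbrs_with_def)
  have disjoint: "nbrs_with N y k \<inter> nbrs_with N y (1 - k) = {}"
    using assms(3) by (auto simp: nbrs_with_def)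
  have finite: "finite (nbrs_with N y k)" "finite (nbrs_with N y (1 - k))"
    using assms(1) by (auto simp: nbrs_with_def)
  have "(\<Prod>j\<in>N. lik c l (y j)) =
      (\<Prod>j\<in>nbrs_with N y k. lik c l (y j)) * (\<Prod>j\<in>nbrs_with N y (1 - k). lik c l (y j))"
    by (subst partition, rule prod.union_disjoint[OF finite disjoint])
  also have "\<dots> = (\<Prod>j\<in>nbrs_with N y k. lik c l k) * (\<Prod>j\<in>nbrs_with N y (1 - k). lik c l (1 - k))"
    by (auto simp: nbrs_with_def intro!: arg_cong2[where f = "(*)"] prod.cong)
  finally show ?thesis
    by simp
qed

lemma posterior_gt_half_iff:
  assumes "k \<in> {0, 1}" and "0 < joint prior c N y k" and "0 < joint prior c N y (1 - k)"
  shows "posterior prior c N y k > 1 / 2 \<longleftrightarrow> joint prior c N y (1 - k) < joint prior c N y k"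
proof -
  have "(\<Sum>l\<in>{0, 1}. joint prior c N y l) = joint prior c N y k + joint prior c N y (1 - k)"
    using assms(1) by auto
  then show ?thesis
    using assms(2,3) by (simp add: posterior_def field_simps)
qed

lemma power_mult_power_less_iff_ln:
  fixes p q r s :: real
  assumes "0 < p" "0 < q" "0 < r" "0 < s" and "p < r"
  shows "r ^ n * s ^ m < p ^ n * q ^ m \<longleftrightarrow>
    real n < real m * ((ln s - ln q) / (ln p - ln r))"
proof -
  have "r ^ n * s ^ m < p ^ n * q ^ m \<longleftrightarrow> ln (r ^ n * s ^ m) < ln (p ^ n * q ^ m)"
    using assms by simp
  also have "\<dots> \<longleftrightarrow> n * ln r + m * ln s < n * ln p + m * ln q"
    using assms by (simp add: ln_mult ln_realpow)
  also have "\<dots> \<longleftrightarrow> m * (ln s - ln q) < n * (ln p - ln r)"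
    by (simp add: algebra_simps)
  also have "\<dots> \<longleftrightarrow> real n < real m * ((ln s - ln q) / (ln p - ln r))"
  proof -
    have "ln p - ln r < 0"
      using assms by simp
    then show ?thesis
      by (simp add: field_simps)
  qed
  finally show ?thesis .
qed

theorem mainTheorem2:
  fixes c prior :: "nat \<Rightarrow> real" and k :: nat and N :: "'a set" and y :: "'a \<Rightarrow> nat"
  assumes k: "k \<in> {0, 1}"
    and c0: "0 < c 0" "c 0 < 1" and c1: "0 < c 1" "c 1 < 1"
    and prior_nonneg: "prior 0 \<ge> 0" "prior 1 \<ge> 0"
    and prior_sum: "prior 0 + prior 1 = 1"
    and balanced: "prior 0 = prior 1"
    and heterophilic: "c k < 1 - c (1 - k)"
    and finN: "finite N"
    and labels: "\<forall>j\<in>N. y j \<in> {0, 1}"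
  shows "posterior prior c N y k > 0.5 \<longleftrightarrow>
    real (card (nbrs_with N y k)) < real (card (nbrs_with N y (1 - k))) *
      ((ln (c (1 - k)) - ln (1 - c k)) / (ln (c k) - ln (1 - c (1 - k))))"
proof -
  define n where "n = card (nbrs_with N y k)"
  define m where "m = card (nbrs_with N y (1 - k))"
  have c_bounds: "0 < c k" "c k < 1" "0 < c (1 - k)" "c (1 - k) < 1"
    using k c0 c1 by auto
  have other_ne_k: "1 - k \<noteq> k"
    using k by auto
  have prior_half: "prior k = 1 / 2" "prior (1 - k) = 1 / 2"
    using k prior_sum balanced by auto
  have joint_k: "joint prior c N y k = 1 / 2 * (c k ^ n * (1 - c k) ^ m)"
    unfolding joint_def prod_lik_eq_power_card[OF finN labels k]
    using k other_ne_k prior_half by (auto simp: lik_def n_def m_def)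
  have joint_other: "joint prior c N y (1 - k) = 1 / 2 * ((1 - c (1 - k)) ^ n * c (1 - k) ^ m)"
    unfolding joint_def prod_lik_eq_power_card[OF finN labels k]
    using k other_ne_k prior_half by (auto simp: lik_def n_def m_def)
  have joint_pos: "0 < joint prior c N y k" "0 < joint prior c N y (1 - k)"
    unfolding joint_k joint_other using c_bounds by simp_all
  have "posterior prior c N y k > 1 / 2 \<longleftrightarrow>
      (1 - c (1 - k)) ^ n * c (1 - k) ^ m < c k ^ n * (1 - c k) ^ m"
    using c_bounds unfolding posterior_gt_half_iff[OF k joint_pos] joint_k joint_other by simp
  also have "\<dots> \<longleftrightarrow> real n < real m * ((ln (c (1 - k)) - ln (1 - c k)) / (ln (c k) - ln (1 - c (1 - k))))"
    using c_bounds heterophilic by (intro power_mult_power_less_iff_ln) auto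
  finally show ?thesis
    by (simp add: n_def m_def)
qed

end
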